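(* In multihop Peg Duotaire, for every integer $n\ge 1$, the position $1^n$ (a block of $n$ consecutive pegs) has nim-value $0$ if $n\equiv 0$ or $1 \pmod 4$, and nim-value $1$ if $n\equiv 2$ or $3\pmod 4$.
   Context: Peg Duotaire is an impartial two-player game played on the infinite line of sites indexed by $\mathbb{Z}$, each site holding a peg or being a hole, with finitely many pegs. A word $w\in\{0,1\}^*$ denotes the position in which $w$ is written on consecutive sites ($1$ = peg, $0$ = hole) and all other sites are holes. A hop: for a peg at site $i$, a peg at site $i+d$ and a hole at site $i+2d$ ($d=\pm1$), move the peg from $i$ to $i+2d$ and remove the peg at $i+d$. In the multihop version, a move is a sequence of one or more hops all performed by the same peg. Players alternate moves; a player unable to move loses. The nim-value of a position is the least nonnegative integer not among the nim-values of positions reachable in one move. *)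

theory Defs
  imports Main
begin

text \<open>A position is the (finite) set of sites holding a peg.\<close>
type_synonym position = "int set"

definition hop_result :: "position \<Rightarrow> int \<Rightarrow> int \<Rightarrow> position" where
  "hop_result P i d = (P - {i, i + d}) \<union> {i + 2 * d}"

definition can_hop :: "position \<Rightarrow> int \<Rightarrow> int \<Rightarrow> bool" where
  "can_hop P i d \<longleftrightarrow> (d = 1 \<or> d = -1) \<and> i \<in> P \<and> i + d \<in> P \<and> i + 2 * d \<notin> P"

inductive multihop :: "position \<Rightarrow> int \<Rightarrow> position \<Rightarrow> int \<Rightarrow> bool" where
  first: "can_hop P j d \<Longrightarrow> multihop P j (hop_result P j d) (j + 2 * d)"
| more: "multihop P j Q k \<Longrightarrow> can_hop Q k d \<Longrightarrow> multihop P j (hop_result Q k d) (k + 2 * d)"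

definition move :: "position \<Rightarrow> position \<Rightarrow> bool" where
  "move P Q \<longleftrightarrow> (\<exists>j k. multihop P j Q k)"

definition mex :: "nat set \<Rightarrow> nat" where
  "mex S = (LEAST m. m \<notin> S)"

text \<open>Nim-value computed with a fuel parameter; every move removes at least one peg,
  so fuel = number of pegs suffices for a finite position.\<close>
fun nimv :: "nat \<Rightarrow> position \<Rightarrow> nat" where
  "nimv 0 P = 0"
| "nimv (Suc n) P = mex (nimv n ` {Q. move P Q})"

definition nim_value :: "position \<Rightarrow> nat" where
  "nim_value P = nimv (card P) P"

definition ones :: "nat \<Rightarrow> position" where
  "ones n = {0..<int n}"

end

theory Submission
  imports Defs
begin

text \<open>Consider a block of \<open>m\<close> consecutive pegs flanked on both sides by pegs that are
  pairwise non-adjacent and separated from the block by at least two holes. The only possible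
  hops are the second peg of the block jumping outward over the first one, or the penultimate
  peg over the last one; the jumping peg lands isolated, so it cannot continue. Hence every
  move is a single hop that shortens the block by two and preserves this shape, all options
  of such a position have the same nim-value, and by induction the nim-value is
  \<open>(m div 2) mod 2\<close>. The position \<open>1\<^sup>n\<close> is the case without flanking pegs.\<close>

definition block_pos :: "int set \<Rightarrow> int \<Rightarrow> nat \<Rightarrow> int set \<Rightarrow> position" where
  "block_pos A s m B = A \<union> {s..<s + int m} \<union> B"

definition block_config :: "int set \<Rightarrow> int \<Rightarrow> nat \<Rightarrow> int set \<Rightarrow> bool" where
  "block_config A s m B \<longleftrightarrow>
     (\<forall>x\<in>A. x \<le> s - 3 \<and> x + 1 \<notin> A) \<and> (\<forall>x\<in>B. s + int m + 2 \<le> x \<and> x + 1 \<notin> B)"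

lemma block_pos_adjacent_pegs:
  assumes "block_config A s m B" "x \<in> block_pos A s m B" "x + 1 \<in> block_pos A s m B"
  shows "s \<le> x \<and> x + 1 < s + int m"
  using assms unfolding block_config_def block_pos_def by fastforce

lemma can_hop_block_pos_iff:
  assumes "block_config A s m B"
  shows "can_hop (block_pos A s m B) i d \<longleftrightarrow>
           2 \<le> m \<and> (i = s + 1 \<and> d = -1 \<or> i = s + int m - 2 \<and> d = 1)"
proof
  assume "can_hop (block_pos A s m B) i d"
  then consider "d = 1" "s \<le> i" "i + 1 < s + int m" "i + 2 \<notin> block_pos A s m B"
    | "d = -1" "s \<le> i - 1" "i < s + int m" "i - 2 \<notin> block_pos A s m B"
    using block_pos_adjacent_pegs[OF assms, of i] block_pos_adjacent_pegs[OF assms, of "i - 1"]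
    unfolding can_hop_def by fastforce
  then show "2 \<le> m \<and> (i = s + 1 \<and> d = -1 \<or> i = s + int m - 2 \<and> d = 1)"
    by cases (auto simp: block_pos_def)
next
  assume "2 \<le> m \<and> (i = s + 1 \<and> d = -1 \<or> i = s + int m - 2 \<and> d = 1)"
  then show "can_hop (block_pos A s m B) i d"
    using assms unfolding block_config_def block_pos_def can_hop_def by auto
qed

lemma hop_result_block_pos_left:
  assumes "block_config A s m B" "2 \<le> m"
  shows "hop_result (block_pos A s m B) (s + 1) (-1) =
           block_pos (insert (s - 1) A) (s + 2) (m - 2) B"
  using assms unfolding block_config_def block_pos_def hop_result_def by (auto simp: of_nat_diff)

lemma hop_result_block_pos_right:
  assumes "block_config A s m B" "2 \<le> m"
  shows "hop_result (block_pos A s m B) (s + int m - 2) 1 =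
           block_pos A s (m - 2) (insert (s + int m) B)"
  using assms unfolding block_config_def block_pos_def hop_result_def by (auto simp: of_nat_diff)

lemma block_config_left:
  "block_config A s m B \<Longrightarrow> 2 \<le> m \<Longrightarrow> block_config (insert (s - 1) A) (s + 2) (m - 2) B"
  unfolding block_config_def by (auto simp: of_nat_diff)

lemma block_config_right:
  "block_config A s m B \<Longrightarrow> 2 \<le> m \<Longrightarrow> block_config A s (m - 2) (insert (s + int m) B)"
  unfolding block_config_def by (auto simp: of_nat_diff)

lemma multihop_block_pos:
  assumes "multihop P j Q k" "P = block_pos A s m B" "block_config A s m B"
  shows "2 \<le> m \<and>
    (Q = block_pos (insert (s - 1) A) (s + 2) (m - 2) B \<and> k = s - 1 \<or>
     Q = block_pos A s (m - 2) (insert (s + int m) B) \<and> k = s + int m)"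
  using assms
proof (induction rule: multihop.induct)
  case (first P j d)
  then have "2 \<le> m" and "j = s + 1 \<and> d = -1 \<or> j = s + int m - 2 \<and> d = 1"
    using can_hop_block_pos_iff by blast+
  then show ?case
    using first hop_result_block_pos_left hop_result_block_pos_right by auto
next
  case (more P j Q k d)
  from more.IH more.prems have m: "2 \<le> m" and
    "Q = block_pos (insert (s - 1) A) (s + 2) (m - 2) B \<and> k = s - 1 \<or>
     Q = block_pos A s (m - 2) (insert (s + int m) B) \<and> k = s + int m"
    by auto
  then have False
    using \<open>can_hop Q k d\<close> can_hop_block_pos_iff block_config_left[OF more.prems(2) m]
      block_config_right[OF more.prems(2) m]
    by (fastforce simp: of_nat_diff)
  then show ?case ..
qed

lemma moves_block_pos:
  assumes "block_config A s m B"
  shows "{Q. move (block_pos A s m B) Q} =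
    (if 2 \<le> m then {block_pos (insert (s - 1) A) (s + 2) (m - 2) B,
                     block_pos A s (m - 2) (insert (s + int m) B)}
     else {})"
proof -
  have "multihop (block_pos A s m B) (s + 1)
      (block_pos (insert (s - 1) A) (s + 2) (m - 2) B) (s - 1)" if "2 \<le> m"
    using multihop.first[of "block_pos A s m B" "s + 1" "-1"] that assms
      can_hop_block_pos_iff hop_result_block_pos_left by simp
  moreover have "multihop (block_pos A s m B) (s + int m - 2)
      (block_pos A s (m - 2) (insert (s + int m) B)) (s + int m)" if "2 \<le> m"
    using multihop.first[of "block_pos A s m B" "s + int m - 2" 1] that assms
      can_hop_block_pos_iff hop_result_block_pos_right by simp
  ultimately show ?thesis
    using multihop_block_pos[OF _ refl assms] unfolding move_def by fastforce
qed

lemma mex_empty: "mex {} = 0"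
  by (simp add: mex_def)

lemma mex_singleton: "mex {v} = (if v = 0 then 1 else 0)"
  unfolding mex_def by (rule Least_equality) auto

lemma nimv_block_pos:
  "block_config A s m B \<Longrightarrow> m div 2 \<le> k \<Longrightarrow> nimv k (block_pos A s m B) = (m div 2) mod 2"
proof (induction k arbitrary: A s m B)
  case 0
  then show ?case by simp
next
  case (Suc k)
  show ?case
  proof (cases "2 \<le> m")
    case False
    then have "{Q. move (block_pos A s m B) Q} = {}"
      using moves_block_pos[OF Suc.prems(1)] by simp
    then show ?thesis using False by (simp only: nimv.simps image_empty mex_empty)
  next
    case True
    have "(m - 2) div 2 \<le> k" and "(m - 2) div 2 = m div 2 - 1"
      using Suc.prems(2) True by (auto simp: div_if)
    then have "nimv k (block_pos (insert (s - 1) A) (s + 2) (m - 2) B) = (m div 2 - 1) mod 2"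
      and "nimv k (block_pos A s (m - 2) (insert (s + int m) B)) = (m div 2 - 1) mod 2"
      using Suc.IH block_config_left[OF Suc.prems(1) True]
        block_config_right[OF Suc.prems(1) True] by simp_all
    then have "nimv (Suc k) (block_pos A s m B) = mex {(m div 2 - 1) mod 2}"
      using moves_block_pos[OF Suc.prems(1)] True by simp
    also have "\<dots> = (m div 2) mod 2"
      using True by (simp add: mex_singleton) presburger
    finally show ?thesis .
  qed
qed

theorem mainTheorem7:
  fixes n :: nat
  assumes "n \<ge> 1"
  shows "nim_value (ones n) = (if n mod 4 = 0 \<or> n mod 4 = 1 then 0 else 1)"
proof -
  have "nim_value (ones n) = nimv n (block_pos {} 0 n {})"
    by (simp add: nim_value_def ones_def block_pos_def)
  also have "\<dots> = (n div 2) mod 2"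
    by (rule nimv_block_pos) (simp_all add: block_config_def)
  finally show ?thesis by presburger
qed

end
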